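(* Assume the standing setup below. Let $x\in X$ and let $s\le t$ be phase change numbers of $X$ with $s_1\le s$. Suppose that $[x]_{s,X}=[x]_{t,X}$ (i.e. $(s,[x]_{s,X})\to(t,[x]_{t,X})$ is a partial layer of $X$) and that $y\in[x]_{s,Y}$. Then $[x]_{s,Y}=[x]_{t,Y}$, i.e. $(s,[x]_{s,Y})\to(t,[x]_{t,Y})$ is a partial layer of $Y$.
   Context: For a finite set $Z\subset\mathbb{R}^n$ and a real number $s\ge 0$, the Vietoris–Rips complex $V_s(Z)$ is the simplicial complex with vertex set $Z$ whose simplices are the nonempty subsets $\sigma\subseteq Z$ with $d(z,z')\le s$ for all $z,z'\in\sigma$ ($d$ the Euclidean distance). For $z\in Z$, $[z]_{s,Z}\subseteq Z$ denotes the set of vertices of the path component of $V_s(Z)$ containing $z$. A partial layer for $Z$ is a pair of parameters $s\le t$ and $z\in Z$ (written as an edge $(s,[z]_{s,Z})\to(t,[z]_{t,Z})$) with $[z]_{s,Z}=[z]_{t,Z}$ as subsets of $Z$. Standing setup: $X\subset\mathbb{R}^n$ is a finite set with at least two points, $y\in\mathbb{R}^n\setminus X$, $Y=X\sqcup\{y\}$. The phase change numbers of $X$ are the distinct values $0=s_0<s_1<\dots<s_k$ of $d(x,x')$ for $x,x'\in X$. There are $x_0\in X$ and a real $r>0$ with $d(y,x_0)<r$ and $r<s_{i+1}-s_i$ for all $0\le i<k$. *)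

theory Defs
  imports "HOL-Analysis.Analysis"
begin

text \<open>Edges of the Vietoris--Rips complex V_s(Z) (its 1-skeleton).  The path
components of a simplicial complex coincide with those of its 1-skeleton.\<close>
definition rips_edges :: "real \<Rightarrow> ('a::metric_space) set \<Rightarrow> ('a \<times> 'a) set" where
  "rips_edges s Z = {(a, b). a \<in> Z \<and> b \<in> Z \<and> dist a b \<le> s}"

definition rips_component :: "real \<Rightarrow> ('a::metric_space) set \<Rightarrow> 'a \<Rightarrow> 'a set" where
  "rips_component s Z z = {w \<in> Z. (z, w) \<in> (rips_edges s Z)\<^sup>*}"

definition phase_change_numbers :: "('a::metric_space) set \<Rightarrow> real set" where
  "phase_change_numbers X = {dist a b | a b. a \<in> X \<and> b \<in> X}"

definition first_phase :: "('a::metric_space) set \<Rightarrow> real" where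
  "first_phase X = Min (phase_change_numbers X - {0})"

end

theory Submission
  imports Defs
begin

text \<open>Since y lies within r of x0 and consecutive phase change numbers of X are more than r
apart, a point of X at distance at most u from y (u a phase change number) is also at distance
at most u from x0. Replacing y by x0 therefore turns every path of the Rips graph of
X \<union> {y} at scale u into a path of the Rips graph of X, so adding y does not merge
components of X at any phase change number. Hence, once y belongs to the component of x at
scale s, growing the scale from s to t adds nothing to that component unless it does so in X.\<close>

definition phase_gaps_exceed :: "real \<Rightarrow> ('a::metric_space) set \<Rightarrow> bool" where
  "phase_gaps_exceed r X \<longleftrightarrow>
     (\<forall>a\<in>phase_change_numbers X. \<forall>b\<in>phase_change_numbers X.
        a < b \<and> (\<forall>c\<in>phase_change_numbers X. \<not> (a < c \<and> c < b)) \<longrightarrow> r < b - a)"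

lemma finite_phase_change_numbers:
  assumes "finite X"
  shows "finite (phase_change_numbers X)"
proof -
  have "phase_change_numbers X = (\<lambda>(a, b). dist a b) ` (X \<times> X)"
    unfolding phase_change_numbers_def by auto
  then show ?thesis
    using assms by simp
qed

lemma phase_change_le_if_less_add_gap:
  assumes "finite X" and "phase_gaps_exceed r X"
    and u: "u \<in> phase_change_numbers X" and d: "d \<in> phase_change_numbers X"
    and "d < u + r"
  shows "d \<le> u"
proof (rule ccontr)
  assume "\<not> d \<le> u"
  define above where "above = {c \<in> phase_change_numbers X. u < c}"
  have "finite above" and "d \<in> above"
    using finite_phase_change_numbers[OF \<open>finite X\<close>] d \<open>\<not> d \<le> u\<close>
    unfolding above_def by auto
  define b where "b = Min above"
  have "b \<in> above" and "b \<le> d"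
    using \<open>finite above\<close> \<open>d \<in> above\<close> unfolding b_def by (auto intro: Min_in)
  moreover have "\<forall>c\<in>phase_change_numbers X. \<not> (u < c \<and> c < b)"
    using Min_le[OF \<open>finite above\<close>] unfolding b_def above_def by fastforce
  ultimately have "r < b - u"
    using assms(2) u unfolding phase_gaps_exceed_def above_def by blast
  with \<open>b \<le> d\<close> \<open>d < u + r\<close> show False
    by simp
qed

lemma dist_le_if_near_and_gaps_exceed:
  assumes "finite X" and "phase_gaps_exceed r X"
    and "x0 \<in> X" and "dist y x0 < r"
    and u: "u \<in> phase_change_numbers X"
    and "a \<in> X" and "dist y a \<le> u"
  shows "dist x0 a \<le> u"
proof (rule phase_change_le_if_less_add_gap[OF assms(1,2) u])
  show "dist x0 a \<in> phase_change_numbers X"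
    using \<open>x0 \<in> X\<close> \<open>a \<in> X\<close> unfolding phase_change_numbers_def by blast
  have "dist x0 a \<le> dist x0 y + dist y a"
    by (rule dist_triangle)
  then show "dist x0 a < u + r"
    using assms(4,7) by (simp add: dist_commute)
qed

lemma rtrancl_map_reflcl:
  assumes "\<And>a b. (a, b) \<in> E \<Longrightarrow> (f a, f b) \<in> F\<^sup>="
    and "(a, b) \<in> E\<^sup>*"
  shows "(f a, f b) \<in> F\<^sup>*"
  using assms(2)
proof (induction rule: rtrancl_induct)
  case (step b c)
  then show ?case
    using assms(1)[of b c] by (auto intro: rtrancl_into_rtrancl)
qed simp

lemma rips_component_mono:
  assumes "s \<le> t" and "X \<subseteq> Y"
  shows "rips_component s X z \<subseteq> rips_component t Y z"
proof -
  have "rips_edges s X \<subseteq> rips_edges t Y"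
    using assms unfolding rips_edges_def by auto
  then show ?thesis
    using assms(2) rtrancl_mono unfolding rips_component_def by blast
qed

lemma rips_component_insert_near_subset:
  assumes "finite X" and "phase_gaps_exceed r X"
    and "x0 \<in> X" and "dist y x0 < r"
    and u: "u \<in> phase_change_numbers X"
    and "x \<in> X" and "y \<notin> X"
  shows "rips_component u (insert y X) x \<inter> X \<subseteq> rips_component u X x"
proof
  define retract where "retract w = (if w = y then x0 else w)" for w
  have retract_edge: "(retract a, retract b) \<in> (rips_edges u X)\<^sup>="
    if "(a, b) \<in> rips_edges u (insert y X)" for a b
  proof -
    have near: "dist x0 c \<le> u" if "c \<in> X" "dist y c \<le> u" for c
      using dist_le_if_near_and_gaps_exceed[OF assms(1-4) u that] .
    from that have "a \<in> insert y X" "b \<in> insert y X" "dist a b \<le> u"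
      unfolding rips_edges_def by auto
    then show ?thesis
      using near[of a] near[of b] \<open>x0 \<in> X\<close>
      unfolding retract_def rips_edges_def by (auto simp: dist_commute)
  qed
  fix w
  assume "w \<in> rips_component u (insert y X) x \<inter> X"
  then have "w \<in> X" and "(x, w) \<in> (rips_edges u (insert y X))\<^sup>*"
    unfolding rips_component_def by auto
  then have "(retract x, retract w) \<in> (rips_edges u X)\<^sup>*"
    using rtrancl_map_reflcl[where f = retract, OF retract_edge] by blast
  then show "w \<in> rips_component u X x"
    using \<open>w \<in> X\<close> \<open>x \<in> X\<close> \<open>y \<notin> X\<close>
    unfolding retract_def rips_component_def by (auto split: if_splits)
qed

theorem corollary13:
  fixes X :: "(real ^ 'n) set" and y x x0 :: "real ^ 'n" and r s t :: real
  assumes "finite X" and "card X \<ge> 2"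
    and "y \<notin> X"
    and "x0 \<in> X" and "r > 0" and "dist y x0 < r"
    and "\<forall>a\<in>phase_change_numbers X. \<forall>b\<in>phase_change_numbers X.
           a < b \<and> (\<forall>c\<in>phase_change_numbers X. \<not> (a < c \<and> c < b)) \<longrightarrow> r < b - a"
    and "x \<in> X"
    and "s \<in> phase_change_numbers X" and "t \<in> phase_change_numbers X" and "s \<le> t"
    and "first_phase X \<le> s"
    and "rips_component s X x = rips_component t X x"
    and "y \<in> rips_component s (insert y X) x"
  shows "rips_component s (insert y X) x = rips_component t (insert y X) x"
proof
  show "rips_component s (insert y X) x \<subseteq> rips_component t (insert y X) x"
    using rips_component_mono[OF \<open>s \<le> t\<close> order_refl] .
  have gaps: "phase_gaps_exceed r X"
    using assms(7) unfolding phase_gaps_exceed_def .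
  have "rips_component t (insert y X) x \<inter> X \<subseteq> rips_component s X x"
    using rips_component_insert_near_subset[OF assms(1) gaps assms(4,6,10,8,3)] assms(13)
    by simp
  also have "\<dots> \<subseteq> rips_component s (insert y X) x"
    by (rule rips_component_mono) auto
  finally show "rips_component t (insert y X) x \<subseteq> rips_component s (insert y X) x"
    using assms(14) unfolding rips_component_def by blast
qed

end
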